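(* Let $\mathbf a,\mathbf c,d_1,d_2,\sigma,f$ satisfy the hypotheses: $\mathbf a=\{a_1,\dots,a_A\}$, $\mathbf c=\{c_1,\dots,c_C\}$ ($A,C$ not both zero), $d_1,d_2\in\mathbb C\setminus\{0\}$, $\sigma>0$, $f\in\mathbb C\setminus\{0\}$, $|c_k|<\sigma$, $|d_1|,|d_2|<1/\sigma$, $c_kd_l\notin\Omega_q$, $d_2/d_1\notin\{q^m:m\in\mathbb Z\}$, $f,fd_1/d_2\notin\{q^m:m\in\mathbb Z\}$; let $s\in\mathbb C\setminus\{0\}$ and fix square roots as $\sqrt{d_2/d_1}:=1/\sqrt{d_1/d_2}$, $\sqrt{d_1d_2}:=d_1\sqrt{d_2/d_1}$; $z=e^{i\psi}$. Then $$\int_{-\pi}^{\pi}\frac{\big((fd_1,\tfrac qfd_2)\tfrac\sigma z,(\tfrac f{d_2},\tfrac q{fd_1},\mathbf a)\tfrac z\sigma;q\big)_\infty}{\big((d_1,d_2)\tfrac\sigma z,\mathbf c\tfrac z\sigma;q\big)_\infty}d\psi=\frac{2\pi\sqrt{d_2/d_1}\,\vartheta(f,fd_1/d_2;q)}{(1-q)s(q;q)_\infty^2\vartheta(d_2/d_1;q)}\int_{s\sqrt{d_2/d_1}}^{s\sqrt{d_1/d_2}}\frac{\big((q\sqrt{d_1/d_2},q\sqrt{d_2/d_1},\mathbf a\sqrt{d_1d_2})\tfrac us;q\big)_\infty}{\big(\mathbf c\sqrt{d_1d_2}\tfrac us;q\big)_\infty}d_qu.$$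
   Context: $q\in\mathbb C$, $0<|q|<1$; $(a;q)_\infty=\prod_{j\ge0}(1-aq^j)$, $(a_1,\dots,a_k;q)_\infty=\prod_i(a_i;q)_\infty$; a list as entry stands for all its elements, $(\mathbf u y;q)_\infty=\prod_i(u_iy;q)_\infty$. $\Omega_q=\{q^{-k}:k\in\mathbb N_0\}$. $\vartheta(x;q)=(x,q/x;q)_\infty$, $\vartheta(x,y;q)=\vartheta(x;q)\vartheta(y;q)$. Jackson $q$-integral: $\int_\alpha^\beta g(u)\,d_qu=(1-q)\beta\sum_{n\ge0}q^ng(q^n\beta)-(1-q)\alpha\sum_{n\ge0}q^ng(q^n\alpha)$. *)

theory Defs
  imports "HOL-Analysis.Analysis"
begin

definition qpoch :: "complex \<Rightarrow> complex \<Rightarrow> complex" where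
  "qpoch a q = (\<Prod>j. 1 - a * q ^ j)"

definition qpoch_list :: "complex list \<Rightarrow> complex \<Rightarrow> complex \<Rightarrow> complex" where
  "qpoch_list us y q = (\<Prod>u\<leftarrow>us. qpoch (u * y) q)"

definition qtheta :: "complex \<Rightarrow> complex \<Rightarrow> complex" where
  "qtheta x q = qpoch x q * qpoch (q / x) q"

definition Omega_q :: "complex \<Rightarrow> complex set" where
  "Omega_q q = {inverse (q ^ k) | k. True}"

definition qpowers :: "complex \<Rightarrow> complex set" where
  "qpowers q = {q powi m | m. True}"

definition jackson_int :: "(complex \<Rightarrow> complex) \<Rightarrow> complex \<Rightarrow> complex \<Rightarrow> complex \<Rightarrow> complex" where
  "jackson_int g \<alpha> \<beta> q =
     (1 - q) * \<beta> * (\<Sum>n. q ^ n * g (q ^ n * \<beta>))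
   - (1 - q) * \<alpha> * (\<Sum>n. q ^ n * g (q ^ n * \<alpha>))"

end

theory Submission
  imports Defs "HOL-Complex_Analysis.Complex_Analysis"
begin

text \<open>Substituting \<open>w = z / \<sigma>\<close> turns the integral into the contour integral of \<open>F w / w\<close> over
  the circle \<open>|w| = 1 / \<sigma>\<close>. Here \<open>F = h * P\<close>, where
  \<open>h w = \<theta>(f d\<^sub>1 / w) \<theta>(f w / d\<^sub>2) / (\<theta>(d\<^sub>1 / w) \<theta>(d\<^sub>2 / w))\<close> satisfies \<open>h (q w) = q h w\<close> and
  \<open>P\<close> is holomorphic on a disc containing the circle, so inside the circle \<open>F w / w\<close> has only the
  simple poles \<open>d\<^sub>l q\<^sup>k\<close>. The residue theorem on the annulus between the circle and a small circle of
  radius \<open>|q|\<^sup>N \<rho>\<close> (with \<open>\<rho>\<close> different from all \<open>|d\<^sub>l| |q|\<^sup>m\<close>), together with the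
  quasi-periodicity of \<open>h\<close>, which makes the inner integral \<open>O(|q|\<^sup>N)\<close>, shows that the integral is
  \<open>2 \<pi> i\<close> times the sum of all these residues. They are \<open>C q\<^sup>k P(d\<^sub>1 q\<^sup>k)\<close> and
  \<open>-(d\<^sub>2/d\<^sub>1) C q\<^sup>k P(d\<^sub>2 q\<^sup>k)\<close> for a theta quotient \<open>C\<close>: the two halves of the Jackson integral.\<close>

lemma weierstrass_product_qpoch:
  fixes q :: complex
  assumes "0 < norm q" "norm q < 1"
  shows "weierstrass_product (\<lambda>n. inverse (q ^ n)) (\<lambda>_. 0)"
proof
  show "inverse (q ^ n) \<noteq> 0" for n
    using assms by auto
  have "filterlim (\<lambda>n. q ^ n) (at 0) sequentially"
    using assms by (intro filterlim_atI LIMSEQ_power_zero) auto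
  then show "filterlim (\<lambda>n. inverse (q ^ n)) at_infinity at_top"
    by (rule filterlim_compose[OF filterlim_inverse_at_infinity])
  show "summable (\<lambda>n. (r / norm (inverse (q ^ n))) ^ Suc 0)" for r
    using assms by (auto simp: norm_inverse norm_power divide_inverse intro!: summable_mult summable_geometric)
qed

lemma qpoch_eq_weierstrass_product:
  fixes q :: complex
  assumes "0 < norm q" "norm q < 1"
  shows "qpoch x q = weierstrass_product.f (\<lambda>n. inverse (q ^ n)) (\<lambda>_. 0) x"
  unfolding weierstrass_product.f_def[OF weierstrass_product_qpoch[OF assms]]
    weierstrass_factor_def qpoch_def
  by (simp add: divide_inverse)

lemma qpoch_has_prod:
  fixes q :: complex
  assumes "0 < norm q" "norm q < 1"
  shows "(\<lambda>j. 1 - x * q ^ j) has_prod qpoch x q"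
  using weierstrass_product.has_prod[OF weierstrass_product_qpoch[OF assms], of x]
  by (simp add: qpoch_eq_weierstrass_product[OF assms] weierstrass_factor_def divide_inverse)

lemma qpoch_eq_0_iff:
  fixes q :: complex
  assumes "0 < norm q" "norm q < 1"
  shows "qpoch x q = 0 \<longleftrightarrow> (\<exists>j. x * q ^ j = 1)"
  using weierstrass_product.zero[OF weierstrass_product_qpoch[OF assms], of x] assms
  by (auto simp: qpoch_eq_weierstrass_product[OF assms] field_simps)

lemma qpoch_holomorphic [holomorphic_intros]:
  fixes q :: complex
  assumes "0 < norm q" "norm q < 1" and "g holomorphic_on A"
  shows "(\<lambda>x. qpoch (g x) q) holomorphic_on A"
  using holomorphic_on_compose[OF assms(3)
      weierstrass_product.holomorphic[OF weierstrass_product_qpoch[OF assms(1,2)]]]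
  by (simp add: o_def qpoch_eq_weierstrass_product[OF assms(1,2)])

lemma qpoch_analytic [analytic_intros]:
  fixes q :: complex
  assumes "0 < norm q" "norm q < 1" and "g analytic_on A"
  shows "(\<lambda>x. qpoch (g x) q) analytic_on A"
  using analytic_on_compose[OF assms(3)
      weierstrass_product.analytic[OF weierstrass_product_qpoch[OF assms(1,2)]]]
  by (simp add: o_def qpoch_eq_weierstrass_product[OF assms(1,2)])

lemma qpoch_unfold:
  fixes q :: complex
  assumes q: "0 < norm q" "norm q < 1"
  shows "qpoch x q = (1 - x) * qpoch (q * x) q"
proof -
  have "(\<lambda>j. 1 - x * q ^ Suc j) has_prod qpoch (q * x) q"
    using qpoch_has_prod[OF q, of "q * x"] by (simp add: algebra_simps)
  then have "(\<lambda>j. 1 - x * q ^ j) has_prod (qpoch (q * x) q * (1 - x))"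
    using has_prod_Suc_imp[of "\<lambda>j. 1 - x * q ^ j"] by simp
  then show ?thesis
    using has_prod_unique2[OF qpoch_has_prod[OF q]] by (simp add: mult.commute)
qed

lemma qpoch_list_holomorphic [holomorphic_intros]:
  fixes q :: complex
  assumes "0 < norm q" "norm q < 1" and "g holomorphic_on A"
  shows "(\<lambda>x. qpoch_list us (g x) q) holomorphic_on A"
  unfolding qpoch_list_def by (induction us) (auto intro!: holomorphic_intros assms)

lemma qpoch_list_eq_0_iff:
  fixes q :: complex
  assumes "0 < norm q" "norm q < 1"
  shows "qpoch_list us y q = 0 \<longleftrightarrow> (\<exists>u\<in>set us. \<exists>j. u * y * q ^ j = 1)"
  unfolding qpoch_list_def by (induction us) (auto simp: qpoch_eq_0_iff[OF assms])

lemma qtheta_holomorphic [holomorphic_intros]: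
  fixes q :: complex
  assumes "0 < norm q" "norm q < 1" and "g holomorphic_on A" and "\<And>x. x \<in> A \<Longrightarrow> g x \<noteq> 0"
  shows "(\<lambda>x. qtheta (g x) q) holomorphic_on A"
  unfolding qtheta_def using assms by (intro holomorphic_intros) auto

lemma qtheta_analytic [analytic_intros]:
  fixes q :: complex
  assumes "0 < norm q" "norm q < 1" and "g analytic_on A" and "\<And>x. x \<in> A \<Longrightarrow> g x \<noteq> 0"
  shows "(\<lambda>x. qtheta (g x) q) analytic_on A"
  unfolding qtheta_def using assms by (intro analytic_intros) auto

lemma qtheta_mult_q:
  fixes q :: complex
  assumes q: "0 < norm q" "norm q < 1" and x: "x \<noteq> 0"
  shows "qtheta (q * x) q = - (1 / x) * qtheta x q"
proof -
  have "qtheta (q * x) q = qpoch (q * x) q * ((1 - 1 / x) * qpoch (q / x) q)"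
    using qpoch_unfold[OF q, of "1 / x"] q by (simp add: qtheta_def)
  also have "\<dots> = - (1 / x) * ((1 - x) * qpoch (q * x) q * qpoch (q / x) q)"
    using x by (simp add: field_simps)
  also have "\<dots> = - (1 / x) * qtheta x q"
    by (simp add: qtheta_def qpoch_unfold[OF q, of x])
  finally show ?thesis .
qed

lemma qtheta_div_q:
  fixes q :: complex
  assumes q: "0 < norm q" "norm q < 1" and x: "x \<noteq> 0"
  shows "qtheta (x / q) q = - (x / q) * qtheta x q"
  using qtheta_mult_q[OF q, of "x / q"] q x by (auto simp: field_simps)

lemma qtheta_inverse:
  fixes q :: complex
  assumes q: "0 < norm q" "norm q < 1" and x: "x \<noteq> 0"
  shows "qtheta (1 / x) q = - (1 / x) * qtheta x q"
proof -
  have "qtheta (1 / x) q = qtheta (q * x) q"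
    using q x by (simp add: qtheta_def mult.commute)
  then show ?thesis
    using qtheta_mult_q[OF q x] by simp
qed

lemma qtheta_eq_0_imp_qpowers:
  fixes q :: complex
  assumes q: "0 < norm q" "norm q < 1" and "qtheta x q = 0"
  shows "x \<in> qpowers q"
proof -
  have "(\<exists>j. x * q ^ j = 1) \<or> (\<exists>j. q / x * q ^ j = 1)"
    using assms(3) by (simp add: qtheta_def qpoch_eq_0_iff[OF q])
  then obtain m :: int where "x = q powi m"
  proof (elim disjE exE)
    fix j assume "x * q ^ j = 1"
    then show ?thesis
      using q that[of "- int j"] by (simp add: power_int_minus field_simps)
  next
    fix j assume "q / x * q ^ j = 1"
    then have "x = q ^ Suc j"
      by (cases "x = 0") (simp_all add: field_simps)
    then show ?thesis
      using that[of "int (Suc j)"] by (simp only: power_int_of_nat)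
  qed
  then show ?thesis
    unfolding qpowers_def by blast
qed

lemma power_neq_one:
  fixes q :: "'a :: real_normed_div_algebra"
  assumes "norm q < 1" "0 < n"
  shows "q ^ n \<noteq> 1"
proof
  assume "q ^ n = 1"
  then have "norm q ^ n = 1"
    by (metis norm_one norm_power)
  moreover have "norm q ^ n < 1"
    using assms by (simp add: power_less_one_iff)
  ultimately show False
    by simp
qed

lemma finite_less_power:
  fixes t c :: real
  assumes t: "0 < t" "t < 1" and c: "0 < c"
  shows "finite {k. c < t ^ k}"
proof -
  have "eventually (\<lambda>n. t ^ n < c) sequentially"
    using order_tendstoD(2)[OF LIMSEQ_power_zero c] t by simp
  then obtain K where K: "\<And>n. n \<ge> K \<Longrightarrow> t ^ n < c"
    unfolding eventually_sequentially by blast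
  have "{k. c < t ^ k} \<subseteq> {..<K}"
  proof
    fix k assume "k \<in> {k. c < t ^ k}"
    then show "k \<in> {..<K}"
      using K[of k] by (cases "k \<ge> K") auto
  qed
  then show ?thesis
    by (rule finite_subset) simp
qed

lemma downclosed_eq_lessThan:
  fixes A :: "nat set"
  assumes "finite A" and "\<And>k j. k \<in> A \<Longrightarrow> j \<le> k \<Longrightarrow> j \<in> A"
  shows "A = {..<card A}"
proof (cases "A = {}")
  case False
  define m where "m = Max A"
  have "m \<in> A"
    using Max_in[OF assms(1) False] by (simp add: m_def)
  have "A = {..m}"
  proof
    show "A \<subseteq> {..m}"
      using Max_ge[OF assms(1)] by (auto simp: m_def)
    show "{..m} \<subseteq> A"
      using assms(2) \<open>m \<in> A\<close> by auto
  qed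
  then show ?thesis
    by (simp add: lessThan_Suc_atMost[symmetric])
qed simp

lemma tendsto_sum_power_levels:
  fixes r :: "nat \<Rightarrow> complex" and t c :: real
  assumes t: "0 < t" "t < 1" and c: "0 < c" and "summable r"
  shows "(\<lambda>N. \<Sum>k\<in>{k. c * t ^ N < t ^ k}. r k) \<longlonglongrightarrow> suminf r"
proof -
  define A where "A N = {k. c * t ^ N < t ^ k}" for N
  have tz: "(\<lambda>n. t ^ n) \<longlonglongrightarrow> 0"
    using t by (intro LIMSEQ_power_zero) simp
  have finA: "finite (A N)" for N
    unfolding A_def using finite_less_power[OF t, of "c * t ^ N"] t c by simp
  have downclosed: "A N = {..<card (A N)}" for N
  proof (rule downclosed_eq_lessThan[OF finA])
    fix k j assume "k \<in> A N" "j \<le> k"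
    moreover have "t ^ k \<le> t ^ j"
      using t \<open>j \<le> k\<close> by (intro power_decreasing) auto
    ultimately show "j \<in> A N"
      by (simp add: A_def)
  qed
  have sums: "(\<Sum>k\<in>A N. r k) = (\<Sum>k<card (A N). r k)" for N
    by (rule arg_cong[where f="sum r", OF downclosed])
  have "eventually (\<lambda>N. M \<le> card (A N)) sequentially" for M
  proof -
    have "eventually (\<lambda>N. t ^ N < t ^ M / c) sequentially"
      using order_tendstoD(2)[OF tz] t c by simp
    then show ?thesis
    proof (rule eventually_mono)
      fix N assume N: "t ^ N < t ^ M / c"
      have "{..<M} \<subseteq> A N"
      proof
        fix k assume "k \<in> {..<M}"
        then have "t ^ M \<le> t ^ k"
          using t by (intro power_decreasing) auto
        moreover have "c * t ^ N < t ^ M"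
          using N c by (simp add: field_simps)
        ultimately show "k \<in> A N"
          by (simp add: A_def)
      qed
      then have "card {..<M} \<le> card (A N)"
        by (rule card_mono[OF finA])
      then show "M \<le> card (A N)"
        by simp
    qed
  qed
  then have "filterlim (\<lambda>N. card (A N)) at_top sequentially"
    by (simp add: filterlim_at_top)
  then have "(\<lambda>N. \<Sum>k<card (A N). r k) \<longlonglongrightarrow> suminf r"
    by (rule filterlim_compose[OF summable_LIMSEQ[OF assms(4)]])
  then have "(\<lambda>N. \<Sum>k\<in>A N. r k) \<longlonglongrightarrow> suminf r"
    by (simp only: sums)
  then show ?thesis
    by (simp only: A_def)
qed

lemma integral_periodic_shift:
  fixes G :: "real \<Rightarrow> complex"
  assumes cont: "continuous_on {-pi..2*pi} G" and per: "\<And>t. G (t + 2*pi) = G t"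
  shows "integral {-pi..pi} G = integral {0..2*pi} G"
proof -
  have int: "G integrable_on {a..b}" if "-pi \<le> a" "b \<le> 2*pi" for a b
    by (rule integrable_continuous_real, rule continuous_on_subset[OF cont]) (use that in auto)
  have e1: "integral {-pi..0} G + integral {0..pi} G = integral {-pi..pi} G"
    using Henstock_Kurzweil_Integration.integral_combine[where a="-pi" and c=0 and b=pi and f=G]
      int[of "-pi" pi] by simp
  have e2: "integral {0..pi} G + integral {pi..2*pi} G = integral {0..2*pi} G"
    using Henstock_Kurzweil_Integration.integral_combine[where a=0 and c=pi and b="2*pi" and f=G]
      int[of 0 "2*pi"] by simp
  have "G \<circ> (+) (2*pi) = G"
    by (rule ext) (simp add: per add.commute)
  then have e3: "integral {-pi..0} G = integral {pi..2*pi} G"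
    using integral_shift_Icc_real[of "-pi" 0 G "2*pi"] by simp
  show ?thesis
    using e1 e2 e3 by (simp add: add.commute)
qed

lemma norm_in_segment_circlepaths:
  fixes r1 r2 :: real
  assumes "0 \<le> r1" "r1 \<le> r2" "x \<in> closed_segment (circlepath 0 r2 t) (circlepath 0 r1 t)"
  shows "r1 \<le> norm x \<and> norm x \<le> r2"
proof -
  define E where "E = exp (2 * of_real pi * \<i> * of_real t)"
  have nE: "norm E = 1"
    unfolding E_def by (simp add: norm_exp_eq_Re)
  obtain u where u: "0 \<le> u" "u \<le> 1" "x = (1 - u) *\<^sub>R (r2 * E) + u *\<^sub>R (r1 * E)"
    using assms(3) unfolding in_segment circlepath E_def by auto
  have "x = complex_of_real ((1 - u) * r2 + u * r1) * E"
    using u(3) by (simp add: scaleR_conv_of_real algebra_simps)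
  then have "norm x = \<bar>(1 - u) * r2 + u * r1\<bar>"
    by (simp only: norm_mult nE norm_of_real mult_1_right)
  also have "\<dots> = (1 - u) * r2 + u * r1"
    using u assms by (intro abs_of_nonneg add_nonneg_nonneg mult_nonneg_nonneg) auto
  finally have "norm x = (1 - u) * r2 + u * r1" .
  moreover have "(1 - u) * r1 \<le> (1 - u) * r2" "u * r1 \<le> u * r2"
    using u assms by (auto intro: mult_left_mono)
  ultimately show ?thesis
    by (auto simp: algebra_simps)
qed

lemma homotopic_loops_circlepaths:
  assumes "0 \<le> r" "r \<le> R" and U: "\<And>w. r \<le> norm w \<Longrightarrow> norm w \<le> R \<Longrightarrow> w \<in> U"
  shows "homotopic_loops U (circlepath 0 R) (circlepath 0 r)"
proof (rule homotopic_loops_linear)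
  fix t :: real
  show "closed_segment (circlepath 0 R t) (circlepath 0 r t) \<subseteq> U"
  proof
    fix x assume "x \<in> closed_segment (circlepath 0 R t) (circlepath 0 r t)"
    then show "x \<in> U"
      using norm_in_segment_circlepaths[of r R x t] assms(1,2) U by blast
  qed
qed auto

lemma contour_integral_circlepath_inverse:
  assumes "0 < r" "norm p \<noteq> r"
  shows "contour_integral (circlepath 0 r) (\<lambda>w. 1 / (w - p)) = (if norm p < r then 2 * pi * \<i> else 0)"
proof (cases "norm p < r")
  case True
  then have "((\<lambda>w. 1 / (w - p)) has_contour_integral (2 * of_real pi * \<i> * 1)) (circlepath 0 r)"
    using Cauchy_integral_circlepath_simple[of "\<lambda>_. 1" 0 r p] by auto
  then show ?thesis
    using True by (simp add: contour_integral_unique)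
next
  case False
  have "((\<lambda>w. 1 / (w - p)) has_contour_integral 0) (circlepath 0 r)"
  proof (rule Cauchy_theorem_disc_simple[of _ 0 "norm p"])
    show "(\<lambda>w. 1 / (w - p)) holomorphic_on ball 0 (norm p)"
      by (intro holomorphic_intros) auto
    show "path_image (circlepath 0 r) \<subseteq> ball 0 (norm p)"
      using False assms by auto
  qed auto
  then show ?thesis
    using False by (simp add: contour_integral_unique)
qed

lemma contour_integral_minus_simple_poles:
  fixes \<phi> :: "complex \<Rightarrow> complex" and p :: "'i \<Rightarrow> complex"
  assumes g: "valid_path g" and U: "open U" and I: "finite I"
    and pi: "path_image g \<subseteq> U - p ` I"
    and holo: "\<phi> holomorphic_on (U - p ` I)"
    and eq: "\<And>w. w \<in> path_image g \<Longrightarrow> G w = \<phi> w - (\<Sum>i\<in>I. c i * (1 / (w - p i)))"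
  shows "contour_integral g G
       = contour_integral g \<phi> - (\<Sum>i\<in>I. c i * contour_integral g (\<lambda>w. 1 / (w - p i)))"
proof -
  have "open (U - p ` I)"
    using U I by (intro open_Diff finite_imp_closed) auto
  then have h1: "(\<phi> has_contour_integral contour_integral g \<phi>) g"
    using contour_integrable_holomorphic_simple[OF holo _ g pi] has_contour_integral_integral by blast
  have "((\<lambda>w. 1 / (w - p i)) has_contour_integral contour_integral g (\<lambda>w. 1 / (w - p i))) g"
    if "i \<in> I" for i
  proof (rule has_contour_integral_integral, rule contour_integrable_holomorphic_simple[of _ "- {p i}"])
    show "(\<lambda>w. 1 / (w - p i)) holomorphic_on - {p i}"
      by (intro holomorphic_intros) auto
    show "path_image g \<subseteq> - {p i}"
      using pi that by auto
  qed (use g in auto)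
  then have h2: "((\<lambda>w. \<Sum>i\<in>I. c i * (1 / (w - p i)))
      has_contour_integral (\<Sum>i\<in>I. c i * contour_integral g (\<lambda>w. 1 / (w - p i)))) g"
    by (intro has_contour_integral_sum[OF I] has_contour_integral_lmul)
  have "contour_integral g G = contour_integral g (\<lambda>w. \<phi> w - (\<Sum>i\<in>I. c i * (1 / (w - p i))))"
    by (rule contour_integral_eq) (rule eq)
  also have "\<dots> = contour_integral g \<phi> - (\<Sum>i\<in>I. c i * contour_integral g (\<lambda>w. 1 / (w - p i)))"
    by (rule contour_integral_unique, rule has_contour_integral_diff[OF h1 h2])
  finally show ?thesis .
qed

lemma holomorphic_remove_simple_poles:
  fixes \<phi> :: "complex \<Rightarrow> complex" and p :: "'i \<Rightarrow> complex" and H :: "'i \<Rightarrow> complex \<Rightarrow> complex"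
  assumes U: "open U" and I: "finite I" and inj: "inj_on p I" and pU: "p ` I \<subseteq> U"
    and holo: "\<phi> holomorphic_on (U - p ` I)"
    and loc: "\<And>i. i \<in> I \<Longrightarrow> \<exists>e>0. H i holomorphic_on ball (p i) e \<and>
                 (\<forall>w\<in>ball (p i) e - {p i}. \<phi> w = H i w / (w - p i))"
  obtains G where "G holomorphic_on U"
    and "\<And>w. w \<in> U - p ` I \<Longrightarrow> G w = \<phi> w - (\<Sum>i\<in>I. H i (p i) * (1 / (w - p i)))"
proof -
  define G where "G w = (if w \<in> p ` I
      then deriv (H (the_inv_into I p w)) w
           - (\<Sum>j\<in>I - {the_inv_into I p w}. H j (p j) * (1 / (w - p j)))
      else \<phi> w - (\<Sum>i\<in>I. H i (p i) * (1 / (w - p i))))" for w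
  have "(\<lambda>w. \<phi> w - (\<Sum>i\<in>I. H i (p i) * (1 / (w - p i)))) holomorphic_on U - p ` I"
    by (intro holomorphic_intros holo) auto
  then have holG: "G holomorphic_on U - p ` I"
    by (rule holomorphic_transform) (simp add: G_def)
  have "(G \<longlongrightarrow> G z) (at z within U)" if z: "z \<in> p ` I" for z
  proof -
    obtain i where i: "i \<in> I" "z = p i"
      using z by blast
    obtain e where e: "e > 0" "H i holomorphic_on ball z e"
      "\<forall>w\<in>ball z e - {z}. \<phi> w = H i w / (w - z)"
      using loc[OF i(1)] i(2) by blast
    obtain e' where e': "e' > 0" "\<forall>w\<in>ball z e'. w \<in> U \<and> (w \<noteq> z \<longrightarrow> w \<notin> p ` I)"
      using finite_ball_avoid[OF U _ ] I pU z by blast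
    have others: "\<forall>j\<in>I - {i}. z - p j \<noteq> 0"
      using inj i by (auto simp: inj_on_def)
    have "(H i has_field_derivative deriv (H i) z) (at z)"
      using e by (intro holomorphic_derivI[of _ "ball z e"]) auto
    then have "((\<lambda>w. (H i w - H i z) / (w - z)) \<longlongrightarrow> deriv (H i) z) (at z)"
      by (simp add: has_field_derivative_iff)
    moreover have "((\<lambda>w. \<Sum>j\<in>I - {i}. H j (p j) * (1 / (w - p j)))
        \<longlongrightarrow> (\<Sum>j\<in>I - {i}. H j (p j) * (1 / (z - p j)))) (at z)"
      by (intro tendsto_intros) (use others in blast)
    ultimately have "((\<lambda>w. (H i w - H i z) / (w - z) - (\<Sum>j\<in>I - {i}. H j (p j) * (1 / (w - p j))))
        \<longlongrightarrow> deriv (H i) z - (\<Sum>j\<in>I - {i}. H j (p j) * (1 / (z - p j)))) (at z)"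
      by (rule tendsto_diff)
    also have "deriv (H i) z - (\<Sum>j\<in>I - {i}. H j (p j) * (1 / (z - p j))) = G z"
      using the_inv_into_f_f[OF inj i(1)] i by (simp add: G_def)
    finally have lim: "((\<lambda>w. (H i w - H i z) / (w - z)
        - (\<Sum>j\<in>I - {i}. H j (p j) * (1 / (w - p j)))) \<longlongrightarrow> G z) (at z)" .
    have "eventually (\<lambda>w. (H i w - H i z) / (w - z)
        - (\<Sum>j\<in>I - {i}. H j (p j) * (1 / (w - p j))) = G w) (at z)"
      unfolding eventually_at ball_UNIV
    proof (intro exI[of _ "min e e'"] conjI allI impI)
      fix w assume w: "w \<noteq> z \<and> dist w z < min e e'"
      then have "w \<in> ball z e - {z}" "w \<notin> p ` I"
        using e' by (auto simp: dist_commute)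
      moreover have "(\<Sum>j\<in>I. H j (p j) * (1 / (w - p j)))
          = H i z * (1 / (w - z)) + (\<Sum>j\<in>I - {i}. H j (p j) * (1 / (w - p j)))"
        using sum.remove[OF I i(1)] i(2) by simp
      ultimately show "(H i w - H i z) / (w - z) - (\<Sum>j\<in>I - {i}. H j (p j) * (1 / (w - p j))) = G w"
        using e(3) by (simp add: G_def diff_divide_distrib)
    qed (use e e' in auto)
    with lim have "(G \<longlongrightarrow> G z) (at z)"
      by (rule Lim_transform_eventually)
    then show ?thesis
      by (rule tendsto_within_subset) simp
  qed
  then have "G holomorphic_on U"
    using no_isolated_singularity'[OF _ holG U] I by blast
  then show ?thesis
    using that by (simp add: G_def)
qed

text \<open>Cauchy's theorem for homotopic loops, applied after subtracting the principal parts
  of the simple poles.\<close>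
lemma homotopic_loops_contour_integral_simple_poles:
  fixes \<phi> :: "complex \<Rightarrow> complex" and p :: "'i \<Rightarrow> complex" and H :: "'i \<Rightarrow> complex \<Rightarrow> complex"
  assumes U: "open U" and I: "finite I" and inj: "inj_on p I" and pU: "p ` I \<subseteq> U"
    and holo: "\<phi> holomorphic_on (U - p ` I)"
    and loc: "\<And>i. i \<in> I \<Longrightarrow> \<exists>e>0. H i holomorphic_on ball (p i) e \<and>
                 (\<forall>w\<in>ball (p i) e - {p i}. \<phi> w = H i w / (w - p i))"
    and hom: "homotopic_loops U g1 g2" and v1: "valid_path g1" and v2: "valid_path g2"
    and av1: "path_image g1 \<inter> p ` I = {}" and av2: "path_image g2 \<inter> p ` I = {}"
  shows "contour_integral g1 \<phi> - (\<Sum>i\<in>I. H i (p i) * contour_integral g1 (\<lambda>w. 1 / (w - p i)))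
       = contour_integral g2 \<phi> - (\<Sum>i\<in>I. H i (p i) * contour_integral g2 (\<lambda>w. 1 / (w - p i)))"
proof -
  obtain G where G: "G holomorphic_on U"
    "\<And>w. w \<in> U - p ` I \<Longrightarrow> G w = \<phi> w - (\<Sum>i\<in>I. H i (p i) * (1 / (w - p i)))"
    using holomorphic_remove_simple_poles[OF U I inj pU holo loc] by blast
  have decomp: "contour_integral g G
      = contour_integral g \<phi> - (\<Sum>i\<in>I. H i (p i) * contour_integral g (\<lambda>w. 1 / (w - p i)))"
    if g: "valid_path g" "path_image g \<subseteq> U" "path_image g \<inter> p ` I = {}" for g
  proof (rule contour_integral_minus_simple_poles[OF g(1) U I _ holo])
    show pg: "path_image g \<subseteq> U - p ` I"
      using g by blast
    fix w assume "w \<in> path_image g"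
    with pg show "G w = \<phi> w - (\<Sum>i\<in>I. H i (p i) * (1 / (w - p i)))"
      by (intro G(2)) blast
  qed
  have "path_image g1 \<subseteq> U" "path_image g2 \<subseteq> U"
    using homotopic_loops_imp_subset[OF hom] by auto
  note decomp[OF v1 this(1) av1] decomp[OF v2 this(2) av2]
  moreover have "contour_integral g1 G = contour_integral g2 G"
    by (rule Cauchy_theorem_homotopic_loops[OF hom U G(1) v1 v2])
  ultimately show ?thesis
    by simp
qed

lemma of_int_neq_thirds: "real_of_int m \<noteq> 1/3" "real_of_int m \<noteq> 2/3"
proof -
  have "3 * m \<noteq> 1" "3 * m \<noteq> 2"
    by presburger+
  then show "real_of_int m \<noteq> 1/3" "real_of_int m \<noteq> 2/3"
    by (auto simp: field_simps simp flip: of_int_eq_iff)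
qed

text \<open>A radius \<open>A t powr x\<close> avoiding both geometric sequences \<open>A t powi m\<close> and \<open>B t powi m\<close>:
  if both \<open>x = 1/3\<close> and \<open>x = 2/3\<close> hit the second one, their ratio \<open>t powr (1/3)\<close> is an
  integer power of \<open>t\<close>.\<close>
lemma powr_third_avoids_power_orbits:
  fixes A B t :: real
  assumes t: "0 < t" "t < 1" and A: "0 < A" and B: "0 < B"
  shows "\<exists>x\<in>{1/3, 2/3::real}. \<forall>m::int. A * t powr x \<noteq> A * t powi m \<and> A * t powr x \<noteq> B * t powi m"
proof (rule ccontr)
  assume H: "\<not> ?thesis"
  have pw: "t powi m = t powr real_of_int m" for m :: int
    using powr_real_of_int'[of t m] t by simp
  have inj: "t powr x = t powr y \<Longrightarrow> x = y" for x y
    using powr_inj[of t x y] t by simp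
  have first: "A * t powr x \<noteq> A * t powi m" if x: "x \<in> {1/3, 2/3}" for x m
  proof
    assume "A * t powr x = A * t powi m"
    then have "t powr x = t powr real_of_int m"
      using A pw by simp
    then have "x = real_of_int m"
      by (rule inj)
    with x of_int_neq_thirds[of m] show False
      by auto
  qed
  obtain m1 where m1: "A * t powr (1/3) = B * t powi m1"
    using H first[of "1/3"] by auto
  obtain m2 where m2: "A * t powr (2/3) = B * t powi m2"
    using H first[of "2/3"] by auto
  have "B * t powr real_of_int m2 = A * t powr (2/3)"
    using m2 pw by simp
  also have "\<dots> = (A * t powr (1/3)) * t powr (1/3)"
    by (simp add: mult.assoc flip: powr_add)
  also have "\<dots> = B * t powr (real_of_int m1 + 1/3)"
    using m1 pw by (simp add: powr_add)
  finally have "t powr real_of_int m2 = t powr (real_of_int m1 + 1/3)"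
    using B by simp
  then have "real_of_int m2 = real_of_int m1 + 1/3"
    by (rule inj)
  then have "real_of_int (m2 - m1) = 1/3"
    by simp
  then show False
    using of_int_neq_thirds by blast
qed

lemma exists_radius_above_inverse:
  fixes cs :: "complex list" and \<sigma> :: real
  assumes "0 < \<sigma>" and "\<forall>ck\<in>set cs. norm ck < \<sigma>"
  obtains R where "1 / \<sigma> < R" and "\<forall>ck\<in>set cs. norm ck * R < 1"
proof -
  define m where "m = Max (insert 0 (norm ` set cs))"
  have m: "m < \<sigma>" "0 \<le> m" "\<forall>ck\<in>set cs. norm ck \<le> m"
    using assms by (auto simp: m_def)
  show ?thesis
  proof (rule that[of "2 / (\<sigma> + m)"])
    show "1 / \<sigma> < 2 / (\<sigma> + m)"
      using m assms(1) by (simp add: field_simps)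
    show "\<forall>ck\<in>set cs. norm ck * (2 / (\<sigma> + m)) < 1"
    proof
      fix ck assume "ck \<in> set cs"
      then have "norm ck * (2 / (\<sigma> + m)) \<le> m * (2 / (\<sigma> + m))"
        using m assms(1) by (intro mult_right_mono) auto
      also have "\<dots> < 1"
        using m assms(1) by (simp add: field_simps)
      finally show "norm ck * (2 / (\<sigma> + m)) < 1" .
    qed
  qed
qed

text \<open>The integrand of the theorem in the variable \<open>w = z / \<sigma>\<close>: the integration circle is
  \<open>|w| = R0\<close>, and the \<open>c\<close>-factors of the denominator do not vanish on \<open>|w| < R1\<close>.\<close>
locale qcontour =
  fixes q f d1 d2 :: complex and a c :: "complex list" and R0 R1 :: real
  assumes q: "0 < norm q" "norm q < 1"
    and d: "d1 \<noteq> 0" "d2 \<noteq> 0" and f: "f \<noteq> 0"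
    and R0: "norm d1 < R0" "norm d2 < R0"
    and R1: "R0 < R1" "\<forall>ck\<in>set c. norm ck * R1 < 1"
    and d_ratio: "d2 / d1 \<notin> qpowers q"
begin

lemma q_nonzero: "q \<noteq> 0"
  using q by auto

lemma R0_pos: "0 < R0"
  using R0 by (meson norm_ge_zero le_less_trans)

abbreviation "th x \<equiv> qtheta x q"
abbreviation "La w \<equiv> qpoch_list a w q"
abbreviation "Lc w \<equiv> qpoch_list c w q"

definition integrand :: "complex \<Rightarrow> complex" where
  "integrand w = qpoch (f*d1/w) q * qpoch (q*d2/(f*w)) q * qpoch (f*w/d2) q * qpoch (q*w/(f*d1)) q * La w
     / (qpoch (d1/w) q * qpoch (d2/w) q * Lc w)"

definition theta_part :: "complex \<Rightarrow> complex" where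
  "theta_part w = th (f*d1/w) * th (f*w/d2) / (th (d1/w) * th (d2/w))"

definition regular_part :: "complex \<Rightarrow> complex" where
  "regular_part w = qpoch (q*w/d1) q * qpoch (q*w/d2) q * La w / Lc w"

definition base :: "bool \<Rightarrow> complex" where
  "base l = (if l then d1 else d2)"

definition pole :: "bool \<times> nat \<Rightarrow> complex" where
  "pole i = base (fst i) * q ^ snd i"

text \<open>The theta part with the vanishing factor \<open>1 - base l / v\<close> of \<open>th (base l / v)\<close> removed.\<close>
definition reduced_theta_part :: "bool \<Rightarrow> complex \<Rightarrow> complex" where
  "reduced_theta_part l v = th (f*d1/v) * th (f * v / d2)
     / (qpoch (q * base l / v) q * qpoch (q * v / base l) q * th (base (\<not> l) / v))"

definition residue_factor :: "bool \<times> nat \<Rightarrow> complex \<Rightarrow> complex" where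
  "residue_factor i w = q ^ snd i * reduced_theta_part (fst i) (w / q ^ snd i) * regular_part w"

definition residue_sum :: "bool \<Rightarrow> complex" where
  "residue_sum l = (\<Sum>k. residue_factor (l, k) (pole (l, k)))"

definition theta_const :: complex where
  "theta_const = th f * th (f*d1/d2) / (qpoch q q ^ 2 * th (d2/d1))"

definition avoids_poles :: "real \<Rightarrow> bool" where
  "avoids_poles \<rho> \<longleftrightarrow> (\<forall>(m::int) l. \<rho> \<noteq> norm (base l) * norm q powi m)"

lemma base_nonzero: "base l \<noteq> 0"
  using d by (simp add: base_def)

lemma integrand_eq_theta_part:
  assumes w: "w \<noteq> 0" and n: "qpoch (q*w/d1) q \<noteq> 0" "qpoch (q*w/d2) q \<noteq> 0"
  shows "integrand w = theta_part w * regular_part w"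
proof -
  have regroup: "A*B*C*D*L/(X*Y*M) = (A*D*(C*B))/((X*X')*(Y*Y')) * (X'*Y'*L/M)"
    if "X' \<noteq> 0" "Y' \<noteq> 0" for A B C D X X' Y Y' L M :: complex
    using that by (cases "X = 0 \<or> Y = 0 \<or> M = 0") (auto simp: field_simps)
  have "q / (f*d1/w) = q*w/(f*d1)" "q / (f*w/d2) = q*d2/(f*w)" "q / (d1/w) = q*w/d1" "q / (d2/w) = q*w/d2"
    using f d w by (simp_all add: field_simps)
  then show ?thesis
    unfolding integrand_def theta_part_def regular_part_def qtheta_def
    by (simp only: regroup[OF n])
qed

text \<open>The quasi-periodicity factors of the four theta functions cancel up to \<open>q\<close>.\<close>
lemma theta_part_mult_q:
  assumes w: "w \<noteq> 0"
  shows "theta_part (q * w) = q * theta_part w"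
proof -
  have regroup: "(x*T1)*(y*T2)/((g*T3)*(h*T4)) = (x*y/(g*h)) * (T1*T2/(T3*T4))"
    if "g \<noteq> 0" "h \<noteq> 0" for x y g h T1 T2 T3 T4 :: complex
    using that by (cases "T3 = 0 \<or> T4 = 0") (auto simp: field_simps)
  have "th (f*d1/(q*w)) = - ((f*d1/w)/q) * th (f*d1/w)"
    using qtheta_div_q[OF q, of "f*d1/w"] f d w by (simp add: mult_ac)
  moreover have "th (f*(q*w)/d2) = - (1/(f*w/d2)) * th (f*w/d2)"
    using qtheta_mult_q[OF q, of "f*w/d2"] f d w by (simp add: mult_ac)
  moreover have "th (d1/(q*w)) = - ((d1/w)/q) * th (d1/w)" "th (d2/(q*w)) = - ((d2/w)/q) * th (d2/w)"
    using qtheta_div_q[OF q, of "d1/w"] qtheta_div_q[OF q, of "d2/w"] d w by (simp_all add: mult_ac)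
  ultimately have "theta_part (q*w) = (- ((f*d1/w)/q)) * (- (1/(f*w/d2))) / ((- ((d1/w)/q)) * (- ((d2/w)/q)))
      * theta_part w"
    unfolding theta_part_def by (simp only: regroup) (use d w q_nonzero in auto)
  also have "(- ((f*d1/w)/q)) * (- (1/(f*w/d2))) / ((- ((d1/w)/q)) * (- ((d2/w)/q))) = q"
    using d w q_nonzero f by (simp add: field_simps)
  finally show ?thesis .
qed

lemma theta_part_mult_qpower:
  assumes w: "w \<noteq> 0"
  shows "theta_part (q ^ k * w) = q ^ k * theta_part w"
proof (induction k)
  case (Suc k)
  have "theta_part (q ^ Suc k * w) = q * theta_part (q ^ k * w)"
    using theta_part_mult_q[of "q ^ k * w"] w q_nonzero by (simp add: mult_ac)
  then show ?case
    using Suc by simp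
qed simp

lemma theta_part_eq_reduced:
  assumes v: "v \<noteq> 0" "v \<noteq> base l"
  shows "theta_part v = v * reduced_theta_part l v / (v - base l)"
proof -
  let ?num = "th (f*d1/v) * th (f * v / d2)"
  let ?rest = "qpoch (q * base l / v) q * qpoch (q * v / base l) q * th (base (\<not> l) / v)"
  have "th (base l / v) = (1 - base l / v) * (qpoch (q * base l / v) q * qpoch (q * v / base l) q)"
    using qpoch_unfold[OF q, of "base l / v"] base_nonzero[of l] v
    by (simp add: qtheta_def mult.assoc)
  moreover have "th (d1/v) * th (d2/v) = th (base l / v) * th (base (\<not> l) / v)"
    by (cases l) (simp_all add: base_def)
  ultimately have "theta_part v = ?num / ((1 - base l / v) * ?rest)"
    unfolding theta_part_def by (simp add: mult_ac)
  also have "\<dots> = (?num / ?rest) / (1 - base l / v)"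
    by (simp add: mult.commute)
  also have "\<dots> = v * reduced_theta_part l v / (v - base l)"
    using v by (simp add: reduced_theta_part_def field_simps)
  finally show ?thesis .
qed

lemma integrand_div_eq_residue_factor:
  assumes w: "w \<noteq> 0" "w \<noteq> pole i" and n: "qpoch (q*w/d1) q \<noteq> 0" "qpoch (q*w/d2) q \<noteq> 0"
  shows "integrand w / w = residue_factor i w / (w - pole i)"
proof -
  obtain l k where i: "i = (l, k)"
    by (cases i)
  define v where "v = w / q ^ k"
  have qk: "q ^ k \<noteq> 0"
    using q_nonzero by simp
  have wv: "w = q ^ k * v" and v0: "v \<noteq> 0" and vb: "v \<noteq> base l"
    using w qk by (auto simp: v_def pole_def i field_simps)
  have "integrand w / w = q ^ k * (v * reduced_theta_part l v / (v - base l)) * regular_part w / (q ^ k * v)"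
    using integrand_eq_theta_part[OF w(1) n] theta_part_mult_qpower[OF v0, of k]
      theta_part_eq_reduced[OF v0 vb] wv by simp
  also have "\<dots> = q ^ k * reduced_theta_part l v * regular_part w / (q ^ k * v - q ^ k * base l)"
    using qk v0 vb by (simp add: field_simps)
  also have "\<dots> = residue_factor i w / (w - pole i)"
    unfolding residue_factor_def pole_def i v_def using qk by (simp add: mult_ac)
  finally show ?thesis .
qed

lemma base_ratio_notin_qpowers:
  assumes "l \<noteq> l'"
  shows "base l / base l' \<notin> qpowers q"
proof
  assume "base l / base l' \<in> qpowers q"
  then obtain m where m: "base l / base l' = q powi m"
    unfolding qpowers_def by blast
  show False
  proof (cases l)
    case True
    then have "d1 / d2 = q powi m"
      using assms m by (simp add: base_def)
    then have "d2 / d1 = q powi (- m)"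
      using d q_nonzero by (simp add: power_int_minus field_simps)
    then show False
      using d_ratio unfolding qpowers_def by blast
  next
    case False
    then have "d2 / d1 = q powi m"
      using assms m by (simp add: base_def)
    then show False
      using d_ratio unfolding qpowers_def by blast
  qed
qed

lemma qpoch_base_ratio_nonzero: "qpoch (base l / base l' * q ^ Suc k) q \<noteq> 0"
proof
  assume "qpoch (base l / base l' * q ^ Suc k) q = 0"
  then obtain j where "base l / base l' * q ^ Suc k * q ^ j = 1"
    using qpoch_eq_0_iff[OF q] by blast
  then have j: "base l / base l' * q ^ (Suc k + j) = 1"
    by (simp add: power_add mult_ac)
  show False
  proof (cases "l = l'")
    case True
    then show False
      using j base_nonzero power_neq_one[OF q(2), of "Suc k + j"] by simp
  next
    case False
    have "base l / base l' = 1 / q ^ (Suc k + j)"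
      using j q_nonzero by (simp add: eq_divide_eq)
    also have "\<dots> = q powi (- int (Suc k + j))"
      by (simp only: power_int_minus power_int_of_nat inverse_eq_divide)
    finally have "base l / base l' = q powi (- int (Suc k + j))" .
    then show False
      using base_ratio_notin_qpowers[OF False] unfolding qpowers_def by blast
  qed
qed

lemma qpoch_pole_nonzero: "qpoch (q * pole i / base l') q \<noteq> 0"
proof -
  obtain l k where i: "i = (l, k)"
    by (cases i)
  have e: "q * pole i / base l' = base l / base l' * q ^ Suc k"
    by (simp add: i pole_def mult_ac)
  show ?thesis
    unfolding e by (rule qpoch_base_ratio_nonzero)
qed

lemma Lc_nonzero:
  assumes "norm w < R1"
  shows "Lc w \<noteq> 0"
proof
  assume "Lc w = 0"
  then obtain ck j where ck: "ck \<in> set c" "ck * w * q ^ j = 1"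
    using qpoch_list_eq_0_iff[OF q] by blast
  have "norm (ck * w * q ^ j) = norm ck * norm w * norm q ^ j"
    by (simp add: norm_mult norm_power)
  also have "\<dots> \<le> norm ck * norm w * 1"
    using q by (intro mult_left_mono power_le_one) auto
  also have "\<dots> \<le> norm ck * R1"
    using assms by (simp add: mult_left_mono)
  also have "\<dots> < 1"
    using R1 ck by auto
  finally show False
    using ck by simp
qed

lemma norm_pole: "norm (pole i) = norm (base (fst i)) * norm q ^ snd i"
  by (simp add: pole_def norm_mult norm_power)

lemma norm_pole_less: "norm (pole i) < R0"
proof -
  have "norm (pole i) \<le> norm (base (fst i)) * 1"
    unfolding norm_pole using q by (intro mult_left_mono power_le_one) auto
  also have "\<dots> < R0"
    using R0 by (simp add: base_def)
  finally show ?thesis .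
qed

lemma pole_nonzero: "pole i \<noteq> 0"
  using q_nonzero base_nonzero by (simp add: pole_def)

lemma inj_pole: "inj pole"
proof (rule injI)
  fix i i' assume e: "pole i = pole i'"
  obtain l k l' k' where i: "i = (l, k)" "i' = (l', k')"
    by (cases i, cases i')
  have e': "base l * q ^ k = base l' * q ^ k'"
    using e by (simp add: i pole_def)
  show "i = i'"
  proof (cases "l = l'")
    case True
    then have "q ^ k = q ^ k'"
      using e' base_nonzero by simp
    then have "norm q ^ k = norm q ^ k'"
      by (metis norm_power)
    then show ?thesis
      using True i q power_inject_exp'[of "norm q" k k'] by simp
  next
    case False
    have "base l / base l' = q powi (int k' - int k)"
      using e' q_nonzero base_nonzero by (simp add: power_int_diff field_simps)
    then show ?thesis
      using base_ratio_notin_qpowers[OF False] unfolding qpowers_def by blast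
  qed
qed

lemma qpoch_base_div_eq_0_imp:
  assumes "qpoch (base l / w) q = 0"
  shows "w \<in> range pole"
proof -
  obtain j where "base l / w * q ^ j = 1"
    using assms qpoch_eq_0_iff[OF q] by blast
  then have "w = pole (l, j)"
    by (cases "w = 0") (auto simp: pole_def field_simps)
  then show ?thesis
    by blast
qed

lemma integrand_holomorphic: "integrand holomorphic_on ball 0 R1 - insert 0 (range pole)"
proof -
  have "qpoch (d1 / w) q \<noteq> 0" "qpoch (d2 / w) q \<noteq> 0" if "w \<notin> range pole" for w
    using qpoch_base_div_eq_0_imp[of True w] qpoch_base_div_eq_0_imp[of False w] that
    by (auto simp: base_def)
  then show ?thesis
    unfolding integrand_def using d f Lc_nonzero by (intro holomorphic_intros q) auto
qed

lemma integrand_div_holomorphic: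
  "(\<lambda>w. integrand w / w) holomorphic_on ball 0 R1 - insert 0 (range pole)"
  by (intro holomorphic_intros integrand_holomorphic) auto

lemma reduced_theta_part_analytic: "reduced_theta_part l analytic_on {base l}"
proof -
  have "qpoch q q \<noteq> 0"
    using qpoch_base_ratio_nonzero[of l l 0] base_nonzero by simp
  moreover have "th (base (\<not> l) / base l) \<noteq> 0"
    using qtheta_eq_0_imp_qpowers[OF q] base_ratio_notin_qpowers[of "\<not> l" l] by auto
  ultimately show ?thesis
    unfolding reduced_theta_part_def using base_nonzero[of l] base_nonzero[of "\<not> l"] f d
    by (intro analytic_intros q) auto
qed

lemma regular_part_holomorphic: "regular_part holomorphic_on ball 0 R1"
  unfolding regular_part_def using Lc_nonzero d by (intro holomorphic_intros q) auto

lemma residue_factor_analytic: "residue_factor i analytic_on {pole i}"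
proof -
  obtain l k where i: "i = (l, k)"
    by (cases i)
  have "(reduced_theta_part l \<circ> (\<lambda>w. w / q ^ k)) analytic_on {pole i}"
    using q_nonzero
    by (intro analytic_on_compose_gen[OF _ reduced_theta_part_analytic])
      (auto intro!: analytic_intros simp: i pole_def)
  moreover have "regular_part analytic_on {pole i}"
    using regular_part_holomorphic norm_pole_less[of i] R1(1)
    by (auto simp: analytic_on_open[symmetric] intro: analytic_on_subset[of _ "ball 0 R1"])
  ultimately show ?thesis
    unfolding residue_factor_def i by (auto intro!: analytic_intros simp: o_def)
qed

lemma pole_local_form:
  "\<exists>e>0. residue_factor i holomorphic_on ball (pole i) e \<and>
     (\<forall>w\<in>ball (pole i) e - {pole i}. integrand w / w = residue_factor i w / (w - pole i))"
proof -
  obtain e1 where e1: "e1 > 0" "residue_factor i holomorphic_on ball (pole i) e1"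
    using residue_factor_analytic[of i] unfolding analytic_on_def by blast
  have "isCont (\<lambda>w. qpoch (q * w / base l) q) (pole i)" for l
    using base_nonzero[of l] by (intro analytic_at_imp_isCont) (auto intro!: analytic_intros q)
  then have "\<exists>e>0. \<forall>y. dist (pole i) y < e \<longrightarrow> qpoch (q * y / base l) q \<noteq> 0" for l
    using continuous_at_avoid qpoch_pole_nonzero by blast
  then obtain e2 e3 where
    e2: "e2 > 0" "\<forall>y. dist (pole i) y < e2 \<longrightarrow> qpoch (q * y / d1) q \<noteq> 0" and
    e3: "e3 > 0" "\<forall>y. dist (pole i) y < e3 \<longrightarrow> qpoch (q * y / d2) q \<noteq> 0"
    unfolding base_def by (metis (full_types))
  define e where "e = min e1 (min e2 (min e3 (norm (pole i))))"
  show ?thesis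
  proof (intro exI[of _ e] conjI ballI)
    show "0 < e"
      using e1 e2 e3 pole_nonzero[of i] by (simp add: e_def)
    show "residue_factor i holomorphic_on ball (pole i) e"
      by (rule holomorphic_on_subset[OF e1(2)]) (auto simp: e_def)
    fix w assume w: "w \<in> ball (pole i) e - {pole i}"
    then have "dist (pole i) w < e2" "dist (pole i) w < e3" "dist (pole i) w < norm (pole i)"
      by (auto simp: e_def)
    then have "w \<noteq> 0" "qpoch (q * w / d1) q \<noteq> 0" "qpoch (q * w / d2) q \<noteq> 0"
      using e2 e3 by auto
    then show "integrand w / w = residue_factor i w / (w - pole i)"
      using w by (intro integrand_div_eq_residue_factor) auto
  qed
qed

lemma finite_levels:
  assumes "0 < r"
  shows "finite {k. r < norm (base l) * norm q ^ k}"
proof -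
  have "{k. r < norm (base l) * norm q ^ k} = {k. r / norm (base l) < norm q ^ k}"
    using base_nonzero[of l] by (auto simp: field_simps)
  then show ?thesis
    using finite_less_power[of "norm q" "r / norm (base l)"] q assms base_nonzero[of l] by simp
qed

lemma poles_outside_eq_Sigma:
  "{i. r < norm (pole i)} = Sigma UNIV (\<lambda>l. {k. r < norm (base l) * norm q ^ k})"
  by (auto simp: norm_pole)

lemma finite_poles_outside:
  assumes "0 < r"
  shows "finite {i. r < norm (pole i)}"
  unfolding poles_outside_eq_Sigma using finite_levels[OF assms] by auto

text \<open>The residue theorem on the annulus \<open>\<rho> < |w| < R0\<close>; the poles with \<open>|w| < \<rho>\<close> contribute
  to both circles and cancel.\<close>
lemma contour_integral_annulus:
  assumes rho: "0 < \<rho>" "\<rho> < R0" and avoid: "\<forall>i. norm (pole i) \<noteq> \<rho>"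
  shows "contour_integral (circlepath 0 R0) (\<lambda>w. integrand w / w)
       - contour_integral (circlepath 0 \<rho>) (\<lambda>w. integrand w / w)
       = 2 * pi * \<i> * (\<Sum>i\<in>{i. \<rho> < norm (pole i)}. residue_factor i (pole i))"
proof -
  define U where "U = ball (0::complex) R1 - cball 0 (\<rho>/2)"
  define I where "I = {i. \<rho>/2 < norm (pole i)}"
  have memU: "w \<in> U \<longleftrightarrow> \<rho>/2 < norm w \<and> norm w < R1" for w :: complex
    by (auto simp: U_def)
  have opU: "open U"
    unfolding U_def by (intro open_Diff) auto
  have finI: "finite I"
    unfolding I_def using rho by (intro finite_poles_outside) simp
  have poleU: "pole ` I \<subseteq> U"
  proof
    fix w assume "w \<in> pole ` I"
    then obtain i where "i \<in> I" "w = pole i"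
      by blast
    then show "w \<in> U"
      using norm_pole_less[of i] R1(1) by (auto simp: I_def memU)
  qed
  have "U - pole ` I \<subseteq> ball 0 R1 - insert 0 (range pole)"
    using rho by (force simp: memU I_def)
  then have holo: "(\<lambda>w. integrand w / w) holomorphic_on U - pole ` I"
    by (rule holomorphic_on_subset[OF integrand_div_holomorphic])
  have hom: "homotopic_loops U (circlepath 0 R0) (circlepath 0 \<rho>)"
    by (rule homotopic_loops_circlepaths) (use rho R1(1) in \<open>auto simp: memU\<close>)
  have "path_image (circlepath 0 R0) \<inter> pole ` I = {}"
    using norm_pole_less R0_pos by (auto simp: less_le)
  moreover have "path_image (circlepath 0 \<rho>) \<inter> pole ` I = {}"
    using avoid rho by auto
  ultimately have main:
    "contour_integral (circlepath 0 R0) (\<lambda>w. integrand w / w)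
       - (\<Sum>i\<in>I. residue_factor i (pole i) * contour_integral (circlepath 0 R0) (\<lambda>w. 1 / (w - pole i)))
     = contour_integral (circlepath 0 \<rho>) (\<lambda>w. integrand w / w)
       - (\<Sum>i\<in>I. residue_factor i (pole i) * contour_integral (circlepath 0 \<rho>) (\<lambda>w. 1 / (w - pole i)))"
    using pole_local_form inj_on_subset[OF inj_pole]
    by (intro homotopic_loops_contour_integral_simple_poles[OF opU finI _ poleU holo _ hom]) auto
  have outer: "contour_integral (circlepath 0 R0) (\<lambda>w. 1 / (w - pole i)) = 2 * pi * \<i>" for i
    using contour_integral_circlepath_inverse[OF R0_pos, of "pole i"] norm_pole_less[of i] by simp
  have inner: "contour_integral (circlepath 0 \<rho>) (\<lambda>w. 1 / (w - pole i))
      = (if norm (pole i) < \<rho> then 2 * pi * \<i> else 0)" for i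
    using contour_integral_circlepath_inverse[OF rho(1)] avoid by blast
  have "contour_integral (circlepath 0 R0) (\<lambda>w. integrand w / w)
      - contour_integral (circlepath 0 \<rho>) (\<lambda>w. integrand w / w)
      = (\<Sum>i\<in>I. residue_factor i (pole i) * contour_integral (circlepath 0 R0) (\<lambda>w. 1 / (w - pole i)))
        - (\<Sum>i\<in>I. residue_factor i (pole i) * contour_integral (circlepath 0 \<rho>) (\<lambda>w. 1 / (w - pole i)))"
    using main by (simp add: algebra_simps)
  also have "\<dots> = (\<Sum>i\<in>I. if \<rho> < norm (pole i) then 2 * pi * \<i> * residue_factor i (pole i) else 0)"
    unfolding sum_subtractf[symmetric]
    by (rule sum.cong[OF refl]) (use outer inner avoid in \<open>auto simp: algebra_simps\<close>)
  also have "\<dots> = (\<Sum>i\<in>{i\<in>I. \<rho> < norm (pole i)}. 2 * pi * \<i> * residue_factor i (pole i))"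
    by (rule sum.inter_filter[OF finI, symmetric])
  also have "{i\<in>I. \<rho> < norm (pole i)} = {i. \<rho> < norm (pole i)}"
    using rho by (auto simp: I_def)
  finally show ?thesis
    by (simp add: sum_distrib_left)
qed

lemma shrunk_radius_le:
  assumes "0 \<le> \<rho>"
  shows "norm q ^ N * \<rho> \<le> \<rho>"
proof -
  have "norm q ^ N \<le> 1"
    using q by (intro power_le_one) auto
  then show ?thesis
    using assms by (intro mult_left_le_one_le) auto
qed

lemma avoids_poles_mult_qpower:
  assumes "avoids_poles \<rho>"
  shows "avoids_poles (norm q ^ N * \<rho>)"
  unfolding avoids_poles_def
proof (intro allI notI)
  fix m :: int and l
  assume "norm q ^ N * \<rho> = norm (base l) * norm q powi m"
  then have "\<rho> = norm (base l) * norm q powi (m - int N)"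
    using q by (simp add: power_int_diff field_simps)
  then show False
    using assms unfolding avoids_poles_def by blast
qed

lemma avoids_poles_norm_pole:
  assumes "avoids_poles \<rho>"
  shows "norm (pole i) \<noteq> \<rho>"
  using assms unfolding avoids_poles_def norm_pole
  by (metis power_int_of_nat)

lemma regular_part_bounded:
  assumes "r < R1"
  obtains B where "\<forall>w. norm w \<le> r \<longrightarrow> norm (regular_part w) \<le> B"
proof -
  have "continuous_on (cball 0 r) regular_part"
    using assms by (intro holomorphic_on_imp_continuous_on holomorphic_on_subset[OF regular_part_holomorphic]) auto
  then have "bounded (regular_part ` cball 0 r)"
    by (intro compact_imp_bounded compact_continuous_image) auto
  then obtain B where "\<forall>w\<in>cball 0 r. norm (regular_part w) \<le> B"
    unfolding bounded_iff by auto
  then show ?thesis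
    using that[of B] by auto
qed

lemma summable_regular_part_poles: "summable (\<lambda>k. q ^ k * regular_part (pole (l, k)))"
proof -
  have "norm (base l) < R1"
    using R0 R1 by (cases l) (auto simp: base_def)
  then obtain B where B: "\<forall>w. norm w \<le> norm (base l) \<longrightarrow> norm (regular_part w) \<le> B"
    by (rule regular_part_bounded)
  have "norm (q ^ k * regular_part (pole (l, k))) \<le> B * norm q ^ k" for k
  proof -
    have "norm (base l) * norm q ^ k \<le> norm (base l) * 1"
      using q by (intro mult_left_mono power_le_one) auto
    then have "norm (regular_part (pole (l, k))) \<le> B"
      using B by (simp add: norm_pole)
    then have "norm (regular_part (pole (l, k))) * norm q ^ k \<le> B * norm q ^ k"
      by (rule mult_right_mono) simp
    then show ?thesis
      by (simp add: norm_mult norm_power mult.commute)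
  qed
  moreover have "summable (\<lambda>k. B * norm q ^ k)"
    using q by (intro summable_mult summable_geometric) auto
  ultimately show ?thesis
    by (rule summable_comparison_test'[rotated])
qed

lemma residue_factor_pole:
  "residue_factor (l, k) (pole (l, k)) = reduced_theta_part l (base l) * (q ^ k * regular_part (pole (l, k)))"
  using q_nonzero by (simp add: residue_factor_def pole_def)

lemma residue_sum_eq:
  "residue_sum l = reduced_theta_part l (base l) * (\<Sum>k. q ^ k * regular_part (pole (l, k)))"
  unfolding residue_sum_def residue_factor_pole by (rule suminf_mult[OF summable_regular_part_poles])

lemma tendsto_partial_residue_sums:
  assumes "0 < \<rho>"
  shows "(\<lambda>N. \<Sum>k\<in>{k. norm q ^ N * \<rho> < norm (base l) * norm q ^ k}. residue_factor (l, k) (pole (l, k)))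
         \<longlonglongrightarrow> residue_sum l"
proof -
  have "{k. norm q ^ N * \<rho> < norm (base l) * norm q ^ k} = {k. \<rho> / norm (base l) * norm q ^ N < norm q ^ k}" for N
    using base_nonzero[of l] by (auto simp: field_simps)
  moreover have "summable (\<lambda>k. residue_factor (l, k) (pole (l, k)))"
    unfolding residue_factor_pole by (intro summable_mult summable_regular_part_poles)
  ultimately show ?thesis
    unfolding residue_sum_def using tendsto_sum_power_levels[of "norm q" "\<rho> / norm (base l)"] q assms base_nonzero[of l]
    by simp
qed

lemma theta_part_bounded_on_circle:
  assumes "0 < \<rho>" "avoids_poles \<rho>"
  obtains K where "0 \<le> K" "\<forall>v\<in>sphere 0 \<rho>. norm (theta_part v) \<le> K"
proof -
  have nz: "th (base l / v) \<noteq> 0" if v: "v \<in> sphere 0 \<rho>" for v l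
  proof
    assume "th (base l / v) = 0"
    then obtain m where "base l / v = q powi m"
      using qtheta_eq_0_imp_qpowers[OF q] unfolding qpowers_def by blast
    then have "norm (base l / v) = norm (q powi m)"
      by (rule arg_cong)
    then have "norm (base l) / \<rho> = norm q powi m"
      using v by (simp add: norm_divide norm_power_int)
    then have "\<rho> = norm (base l) * norm q powi (- m)"
      using assms(1) q by (simp add: power_int_minus field_simps)
    then show False
      using assms(2) unfolding avoids_poles_def by blast
  qed
  have "theta_part holomorphic_on sphere 0 \<rho>"
    unfolding theta_part_def using assms(1) d f nz[of _ True] nz[of _ False]
    by (intro holomorphic_intros q) (auto simp: base_def)
  then have "bounded (theta_part ` sphere 0 \<rho>)"
    by (intro compact_imp_bounded compact_continuous_image holomorphic_on_imp_continuous_on) auto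
  then obtain K where "0 < K" "\<forall>x\<in>theta_part ` sphere 0 \<rho>. norm x \<le> K"
    unfolding bounded_pos by blast
  then show ?thesis
    using that[of K] by simp
qed

lemma norm_integrand_on_shrunk_circle:
  assumes \<rho>: "0 < \<rho>" "\<rho> < R1" "avoids_poles \<rho>"
    and K: "0 \<le> K" "\<forall>v\<in>sphere 0 \<rho>. norm (theta_part v) \<le> K"
    and B: "0 \<le> B" "\<forall>w. norm w \<le> \<rho> \<longrightarrow> norm (regular_part w) \<le> B"
    and w: "norm w = norm q ^ N * \<rho>"
  shows "norm (integrand w) \<le> norm q ^ N * (K * B)"
proof -
  have w0: "w \<noteq> 0"
    using w \<rho> q by auto
  have nz: "qpoch (q * w / base l) q \<noteq> 0" for l
  proof
    assume "qpoch (q * w / base l) q = 0"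
    then obtain j where "q * w / base l * q ^ j = 1"
      using qpoch_eq_0_iff[OF q] by blast
    then have "w * q ^ Suc j = base l"
      using base_nonzero[of l] by (simp add: field_simps)
    then have "norm q ^ N * \<rho> * norm q ^ Suc j = norm (base l)"
      using w by (metis norm_mult norm_power)
    then have "norm q ^ N * \<rho> = norm (base l) / norm q ^ Suc j"
      using q by (simp add: eq_divide_eq del: power_Suc)
    also have "\<dots> = norm (base l) * norm q powi (- int (Suc j))"
      by (simp only: power_int_minus power_int_of_nat divide_inverse)
    finally have "norm q ^ N * \<rho> = norm (base l) * norm q powi (- int (Suc j))" .
    then show False
      using avoids_poles_mult_qpower[OF \<rho>(3), of N] unfolding avoids_poles_def by blast
  qed
  have "integrand w = theta_part w * regular_part w"
    using w0 nz[of True] nz[of False] by (intro integrand_eq_theta_part) (simp_all add: base_def)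
  also have "theta_part w = q ^ N * theta_part (w / q ^ N)"
    using theta_part_mult_qpower[of "w / q ^ N" N] w0 q_nonzero by simp
  finally have "norm (integrand w) = norm q ^ N * norm (theta_part (w / q ^ N)) * norm (regular_part w)"
    by (simp add: norm_mult norm_power)
  also have "\<dots> \<le> norm q ^ N * K * B"
  proof (intro mult_mono mult_left_mono)
    show "norm (theta_part (w / q ^ N)) \<le> K"
      using K(2) w q by (simp add: norm_divide norm_power)
    show "norm (regular_part w) \<le> B"
      using B(2) w shrunk_radius_le[of \<rho> N] \<rho> by simp
  qed (use K B in auto)
  finally show ?thesis
    by (simp add: mult_ac)
qed

lemma norm_contour_integral_shrunk_circle:
  assumes \<rho>: "0 < \<rho>" "\<rho> < R1" "avoids_poles \<rho>"
    and K: "0 \<le> K" "\<forall>v\<in>sphere 0 \<rho>. norm (theta_part v) \<le> K"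
    and B: "0 \<le> B" "\<forall>w. norm w \<le> \<rho> \<longrightarrow> norm (regular_part w) \<le> B"
  shows "norm (contour_integral (circlepath 0 (norm q ^ N * \<rho>)) (\<lambda>w. integrand w / w))
      \<le> 2 * pi * (K * B) * norm q ^ N"
proof -
  let ?r = "norm q ^ N * \<rho>"
  have "?r \<le> \<rho>"
    by (rule shrunk_radius_le) (use \<rho> in simp)
  moreover have "0 < ?r"
    using q \<rho> by simp
  ultimately have r: "0 < ?r" "?r < R1"
    using \<rho> by linarith+
  have "path_image (circlepath 0 ?r) \<subseteq> ball 0 R1 - insert 0 (range pole)"
    using r avoids_poles_norm_pole[OF avoids_poles_mult_qpower[OF \<rho>(3)]] q_nonzero by auto
  then have "continuous_on (path_image (circlepath 0 ?r)) (\<lambda>w. integrand w / w)"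
    by (intro holomorphic_on_imp_continuous_on holomorphic_on_subset[OF integrand_div_holomorphic])
  then have "((\<lambda>w. integrand w / w) has_contour_integral
      contour_integral (circlepath 0 ?r) (\<lambda>w. integrand w / w)) (circlepath 0 ?r)"
    by (intro has_contour_integral_integral contour_integrable_continuous_circlepath)
  then have "norm (contour_integral (circlepath 0 ?r) (\<lambda>w. integrand w / w))
      \<le> (norm q ^ N * (K * B) / ?r) * (2 * pi * ?r)"
  proof (rule has_contour_integral_bound_circlepath)
    fix w :: complex assume "norm (w - 0) = ?r"
    then have w: "norm w = ?r"
      by simp
    then have "norm (integrand w) \<le> norm q ^ N * (K * B)"
      by (rule norm_integrand_on_shrunk_circle[OF \<rho> K B])
    then show "norm (integrand w / w) \<le> norm q ^ N * (K * B) / ?r"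
      unfolding norm_divide w using r(1) by (rule divide_right_mono[OF _ less_imp_le])
  next
    show "0 \<le> norm q ^ N * (K * B) / ?r"
      using K(1) B(1) r(1) by (intro divide_nonneg_pos mult_nonneg_nonneg) auto
  qed (rule r(1))
  also have "\<dots> = 2 * pi * (K * B) * norm q ^ N"
  proof -
    have cancel: "X / r * (2 * pi * r) = 2 * pi * X" if "0 < r" for X r :: real
      using that by simp
    show ?thesis
      by (subst cancel[OF r(1)]) (simp add: mult_ac)
  qed
  finally show ?thesis .
qed

lemma tendsto_contour_integral_shrinking_circles:
  assumes \<rho>: "0 < \<rho>" "\<rho> < R0" "avoids_poles \<rho>"
  shows "(\<lambda>N. contour_integral (circlepath 0 (norm q ^ N * \<rho>)) (\<lambda>w. integrand w / w)) \<longlonglongrightarrow> 0"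
proof -
  obtain K where K: "0 \<le> K" "\<forall>v\<in>sphere 0 \<rho>. norm (theta_part v) \<le> K"
    using theta_part_bounded_on_circle[OF \<rho>(1,3)] by blast
  have \<rho>R1: "\<rho> < R1"
    using \<rho> R1 by simp
  then obtain B where B: "\<forall>w. norm w \<le> \<rho> \<longrightarrow> norm (regular_part w) \<le> B"
    by (rule regular_part_bounded)
  have B0: "0 \<le> B"
    using B[rule_format, of 0] \<rho> by (auto intro: order_trans[OF norm_ge_zero])
  have "eventually (\<lambda>N. norm (contour_integral (circlepath 0 (norm q ^ N * \<rho>)) (\<lambda>w. integrand w / w))
      \<le> 2 * pi * (K * B) * norm q ^ N) sequentially"
    by (intro always_eventually allI norm_contour_integral_shrunk_circle[OF \<rho>(1) \<rho>R1 \<rho>(3) K B0 B])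
  moreover have "(\<lambda>N. 2 * pi * (K * B) * norm q ^ N) \<longlonglongrightarrow> 0"
    using q by (intro tendsto_mult_right_zero LIMSEQ_power_zero) auto
  ultimately show ?thesis
    by (rule Lim_null_comparison)
qed

lemma contour_integral_outer_circle:
  assumes \<rho>: "0 < \<rho>" "\<rho> < R0" "avoids_poles \<rho>"
  shows "contour_integral (circlepath 0 R0) (\<lambda>w. integrand w / w)
       = 2 * pi * \<i> * (residue_sum True + residue_sum False)"
proof -
  define partial where "partial N = (\<Sum>l\<in>UNIV. \<Sum>k\<in>{k. norm q ^ N * \<rho> < norm (base l) * norm q ^ k}.
      residue_factor (l, k) (pole (l, k)))" for N
  have eq: "contour_integral (circlepath 0 (norm q ^ N * \<rho>)) (\<lambda>w. integrand w / w) + 2 * pi * \<i> * partial N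
      = contour_integral (circlepath 0 R0) (\<lambda>w. integrand w / w)" for N
  proof -
    have "norm q ^ N * \<rho> \<le> \<rho>"
      by (rule shrunk_radius_le) (use \<rho> in simp)
    moreover have "0 < norm q ^ N * \<rho>"
      using q \<rho> by simp
    ultimately have r: "0 < norm q ^ N * \<rho>" "norm q ^ N * \<rho> < R0"
      using \<rho> by linarith+
    have "(\<Sum>i\<in>{i. norm q ^ N * \<rho> < norm (pole i)}. residue_factor i (pole i)) = partial N"
      unfolding partial_def poles_outside_eq_Sigma
      by (subst sum.Sigma) (use finite_levels[OF r(1)] in \<open>simp_all add: split_def\<close>)
    then have "contour_integral (circlepath 0 R0) (\<lambda>w. integrand w / w)
        - contour_integral (circlepath 0 (norm q ^ N * \<rho>)) (\<lambda>w. integrand w / w) = 2 * pi * \<i> * partial N"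
      using contour_integral_annulus[OF r] avoids_poles_norm_pole[OF avoids_poles_mult_qpower[OF \<rho>(3)]]
      by simp
    then show ?thesis
      by (simp add: algebra_simps)
  qed
  have "(\<lambda>N. contour_integral (circlepath 0 (norm q ^ N * \<rho>)) (\<lambda>w. integrand w / w) + 2 * pi * \<i> * partial N)
      \<longlonglongrightarrow> 0 + 2 * pi * \<i> * (\<Sum>l\<in>UNIV. residue_sum l)"
    unfolding partial_def
    by (intro tendsto_intros tendsto_contour_integral_shrinking_circles tendsto_partial_residue_sums \<rho>)
  then have "(\<lambda>N. contour_integral (circlepath 0 R0) (\<lambda>w. integrand w / w))
      \<longlonglongrightarrow> 2 * pi * \<i> * (\<Sum>l\<in>UNIV. residue_sum l)"
    by (simp only: eq add_0_left)
  then show ?thesis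
    by (simp add: LIMSEQ_const_iff UNIV_bool add.commute)
qed

lemma integral_integrand_circle_avoiding:
  assumes \<rho>: "0 < \<rho>" "\<rho> < R0" "avoids_poles \<rho>"
  shows "integral {-pi..pi} (\<lambda>t. integrand (of_real R0 * cis t)) = 2 * pi * (residue_sum True + residue_sum False)"
proof -
  define G where "G t = integrand (of_real R0 * cis t)" for t
  have nz: "complex_of_real R0 * cis t \<noteq> 0" for t
    using R0_pos by simp
  have "contour_integral (circlepath 0 R0) (\<lambda>w. integrand w / w)
      = integral {0..2*pi} (\<lambda>t. integrand (0 + R0 * cis t) / (0 + R0 * cis t) * R0 * \<i> * cis t)"
    unfolding circlepath_def by (rule contour_integral_part_circlepath_eq) simp
  also have "\<dots> = integral {0..2*pi} (\<lambda>t. \<i> * G t)"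
    by (rule integral_cong) (use nz in \<open>simp add: G_def field_simps\<close>)
  finally have "\<i> * integral {0..2*pi} G = 2 * pi * \<i> * (residue_sum True + residue_sum False)"
    using contour_integral_outer_circle[OF \<rho>] by simp
  moreover have "integral {-pi..pi} G = integral {0..2*pi} G"
  proof (rule integral_periodic_shift)
    have "sphere 0 R0 \<subseteq> ball 0 R1 - insert 0 (range pole)"
      using R0_pos R1(1) norm_pole_less by (auto simp: less_le)
    then have "continuous_on (sphere 0 R0) integrand"
      by (intro holomorphic_on_imp_continuous_on holomorphic_on_subset[OF integrand_holomorphic])
    moreover have "continuous_on {-pi..2*pi} (\<lambda>t. complex_of_real R0 * cis t)"
      unfolding cis_conv_exp by (intro continuous_intros)
    ultimately have "continuous_on {-pi..2*pi} (integrand \<circ> (\<lambda>t. complex_of_real R0 * cis t))"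
      using R0_pos by (intro continuous_on_compose) (auto elim!: continuous_on_subset simp: norm_mult)
    then show "continuous_on {-pi..2*pi} G"
      by (simp add: G_def o_def)
    fix t
    have "cis (t + 2*pi) = cis t"
      using cis_mult[of t "2*pi"] by (simp add: complex_eq_iff)
    then show "G (t + 2*pi) = G t"
      by (simp only: G_def)
  qed
  ultimately have "\<i> * integral {-pi..pi} G = \<i> * (2 * pi * (residue_sum True + residue_sum False))"
    by (simp add: mult_ac)
  then show ?thesis
    unfolding G_def by simp
qed

lemma exists_avoiding_radius:
  obtains \<rho> where "0 < \<rho>" "\<rho> < R0" "avoids_poles \<rho>"
proof -
  have "0 < norm q" "norm q < 1" "0 < norm d1" "0 < norm d2"
    using q d by auto
  from powr_third_avoids_power_orbits[OF this] obtain x where x: "x \<in> {1/3, 2/3}"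
    "\<forall>m::int. norm d1 * norm q powr x \<noteq> norm d1 * norm q powi m
            \<and> norm d1 * norm q powr x \<noteq> norm d2 * norm q powi m"
    by blast
  show ?thesis
  proof (rule that)
    show "0 < norm d1 * norm q powr x"
      using q d by simp
    have "norm q powr x < 1 powr x"
      using x(1) q by (intro powr_less_mono2) auto
    then have "norm d1 * norm q powr x < norm d1 * 1"
      using d by (intro mult_strict_left_mono) auto
    then show "norm d1 * norm q powr x < R0"
      using R0(1) by linarith
    show "avoids_poles (norm d1 * norm q powr x)"
      unfolding avoids_poles_def base_def using x(2) by auto
  qed
qed

lemma integral_integrand_circle:
  "integral {-pi..pi} (\<lambda>t. integrand (of_real R0 * cis t)) = 2 * pi * (residue_sum True + residue_sum False)"
proof -
  obtain \<rho> where "0 < \<rho>" "\<rho> < R0" "avoids_poles \<rho>"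
    by (rule exists_avoiding_radius)
  then show ?thesis
    by (rule integral_integrand_circle_avoiding)
qed

lemma reduced_theta_part_True: "reduced_theta_part True (base True) = theta_const"
  using d by (simp add: reduced_theta_part_def base_def theta_const_def power2_eq_square mult_ac)

lemma reduced_theta_part_False: "reduced_theta_part False (base False) = - (d2 / d1) * theta_const"
proof -
  have "reduced_theta_part False (base False) = th (f*d1/d2) * th f / (qpoch q q * qpoch q q * th (d1/d2))"
    using d by (simp add: reduced_theta_part_def base_def)
  also have "th (d1/d2) = - (d1/d2) * th (d2/d1)"
    using qtheta_inverse[OF q, of "d2/d1"] d by simp
  finally show ?thesis
    using d by (simp add: theta_const_def power2_eq_square field_simps)
qed

lemma residue_sums_eq:
  "residue_sum True + residue_sum False
   = theta_const * ((\<Sum>k. q ^ k * regular_part (pole (True, k)))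
                    - d2 / d1 * (\<Sum>k. q ^ k * regular_part (pole (False, k))))"
  using reduced_theta_part_True reduced_theta_part_False
  by (simp add: residue_sum_eq algebra_simps)

lemma integrand_on_circle:
  assumes "0 < \<sigma>" "R0 = 1 / \<sigma>"
  shows "(let z = exp (\<i> * complex_of_real \<psi>) in
       (qpoch (f * d1 * \<sigma> / z) q * qpoch (q / f * d2 * \<sigma> / z) q
        * qpoch (f / d2 * z / \<sigma>) q * qpoch (q / (f * d1) * z / \<sigma>) q
        * qpoch_list a (z / \<sigma>) q)
       / (qpoch (d1 * \<sigma> / z) q * qpoch (d2 * \<sigma> / z) q * qpoch_list c (z / \<sigma>) q))
      = integrand (of_real R0 * cis \<psi>)"
proof -
  define z where "z = exp (\<i> * complex_of_real \<psi>)"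
  define w where "w = z / complex_of_real \<sigma>"
  have z: "z \<noteq> 0" "complex_of_real \<sigma> \<noteq> 0"
    using assms by (auto simp: z_def)
  have "complex_of_real R0 = 1 / complex_of_real \<sigma>"
    using assms by simp
  then have w: "of_real R0 * cis \<psi> = w"
    by (simp add: w_def z_def cis_conv_exp)
  have "f * d1 * \<sigma> / z = f * d1 / w" "q / f * d2 * \<sigma> / z = q * d2 / (f * w)"
    "f / d2 * z / \<sigma> = f * w / d2" "q / (f * d1) * z / \<sigma> = q * w / (f * d1)"
    "d1 * \<sigma> / z = d1 / w" "d2 * \<sigma> / z = d2 / w"
    using z f d by (simp_all add: w_def field_simps)
  note arguments = this
  show ?thesis
    unfolding Let_def z_def[symmetric] w arguments w_def[symmetric] integrand_def ..
qed

lemma jackson_int_eq_pole_sums: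
  assumes s: "s \<noteq> 0" and r: "r ^ 2 = d1 / d2"
  shows "jackson_int (\<lambda>u. (qpoch (q * r * u / s) q * qpoch (q * (1 / r) * u / s) q
                           * qpoch_list a (d1 * (1 / r) * u / s) q)
                          / qpoch_list c (d1 * (1 / r) * u / s) q)
          (s * (1 / r)) (s * r) q
     = (1 - q) * (s * r) * (\<Sum>k. q ^ k * regular_part (pole (True, k)))
       - (1 - q) * (s * (1 / r)) * (\<Sum>k. q ^ k * regular_part (pole (False, k)))"
proof -
  define g where "g = (\<lambda>u. (qpoch (q * r * u / s) q * qpoch (q * (1 / r) * u / s) q
      * qpoch_list a (d1 * (1 / r) * u / s) q) / qpoch_list c (d1 * (1 / r) * u / s) q)"
  have r0: "r \<noteq> 0"
    using r d by auto
  have d1: "d1 = r ^ 2 * d2"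
    using r d by (simp add: field_simps)
  have g1: "g (q ^ n * (s * r)) = regular_part (pole (True, n))" for n
  proof -
    have "q * r * (q ^ n * (s * r)) / s = q * (d1 * q ^ n) / d2"
      "q * (1 / r) * (q ^ n * (s * r)) / s = q * (d1 * q ^ n) / d1"
      "d1 * (1 / r) * (q ^ n * (s * r)) / s = d1 * q ^ n"
      using s d r0 by (simp_all add: d1 power2_eq_square field_simps)
    note arguments = this
    show ?thesis
      unfolding g_def arguments regular_part_def pole_def base_def by (simp add: mult_ac)
  qed
  have g2: "g (q ^ n * (s * (1 / r))) = regular_part (pole (False, n))" for n
  proof -
    have "q * r * (q ^ n * (s * (1 / r))) / s = q * (d2 * q ^ n) / d2"
      "q * (1 / r) * (q ^ n * (s * (1 / r))) / s = q * (d2 * q ^ n) / d1"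
      "d1 * (1 / r) * (q ^ n * (s * (1 / r))) / s = d2 * q ^ n"
      using s d r0 by (simp_all add: d1 power2_eq_square field_simps)
    note arguments = this
    show ?thesis
      unfolding g_def arguments regular_part_def pole_def base_def by (simp add: mult_ac)
  qed
  have "jackson_int g (s * (1 / r)) (s * r) q
      = (1 - q) * (s * r) * (\<Sum>k. q ^ k * regular_part (pole (True, k)))
        - (1 - q) * (s * (1 / r)) * (\<Sum>k. q ^ k * regular_part (pole (False, k)))"
    unfolding jackson_int_def g1 g2 ..
  from this[unfolded g_def] show ?thesis .
qed

lemma residue_sums_eq_jackson_int:
  fixes r s :: complex
  assumes s: "s \<noteq> 0" and r: "r ^ 2 = d1 / d2"
  shows "2 * pi * (residue_sum True + residue_sum False)
     = 2 * pi * (1 / r) * th f * th (f * d1 / d2) / ((1 - q) * s * (qpoch q q) ^ 2 * th (d2 / d1))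
       * jackson_int (\<lambda>u. (qpoch (q * r * u / s) q * qpoch (q * (1 / r) * u / s) q
                           * qpoch_list a (d1 * (1 / r) * u / s) q)
                          / qpoch_list c (d1 * (1 / r) * u / s) q)
          (s * (1 / r)) (s * r) q"
proof -
  define T where "T l = (\<Sum>k. q ^ k * regular_part (pole (l, k)))" for l
  have r0: "r \<noteq> 0"
    using r d by auto
  have "qpoch q q \<noteq> 0" "th (d2 / d1) \<noteq> 0" "1 - q \<noteq> 0"
    using qpoch_base_ratio_nonzero[of True True 0] base_nonzero[of True]
      qtheta_eq_0_imp_qpowers[OF q] d_ratio q by auto
  note nonzero = this s r0
  have "2 * pi * (residue_sum True + residue_sum False) = 2 * pi * theta_const * (T True - d2 / d1 * T False)"
    unfolding residue_sums_eq T_def by simp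
  also have "d2 / d1 = 1 / r * (1 / r)"
    using r d r0 by (simp add: power2_eq_square field_simps)
  also have "2 * pi * theta_const * (T True - 1 / r * (1 / r) * T False)
      = 2 * pi * (1 / r) * th f * th (f * d1 / d2) / ((1 - q) * s * qpoch q q ^ 2 * th (d2 / d1))
        * ((1 - q) * (s * r) * T True - (1 - q) * (s * (1 / r)) * T False)"
    using nonzero unfolding theta_const_def by (simp add: field_simps)
  finally show ?thesis
    unfolding jackson_int_eq_pole_sums[OF s r] T_def .
qed

end

theorem corollary2p5:
  fixes q f d1 d2 s r :: complex and \<sigma> :: real and a c :: "complex list"
  assumes hq: "0 < cmod q" "cmod q < 1"
    and hAC: "a \<noteq> [] \<or> c \<noteq> []"
    and hd: "d1 \<noteq> 0" "d2 \<noteq> 0"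
    and h\<sigma>: "\<sigma> > 0"
    and hf: "f \<noteq> 0"
    and hc: "\<forall>ck \<in> set c. cmod ck < \<sigma>"
    and hdb: "cmod d1 < 1 / \<sigma>" "cmod d2 < 1 / \<sigma>"
    and hcd: "\<forall>ck \<in> set c. ck * d1 \<notin> Omega_q q \<and> ck * d2 \<notin> Omega_q q"
    and hd21: "d2 / d1 \<notin> qpowers q"
    and hfq: "f \<notin> qpowers q" "f * d1 / d2 \<notin> qpowers q"
    and hs: "s \<noteq> 0"
    and hr: "r ^ 2 = d1 / d2"
  shows
   "integral {-pi..pi} (\<lambda>\<psi>. let z = exp (\<i> * complex_of_real \<psi>) in
       (qpoch (f * d1 * \<sigma> / z) q * qpoch (q / f * d2 * \<sigma> / z) q
        * qpoch (f / d2 * z / \<sigma>) q * qpoch (q / (f * d1) * z / \<sigma>) q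
        * qpoch_list a (z / \<sigma>) q)
       / (qpoch (d1 * \<sigma> / z) q * qpoch (d2 * \<sigma> / z) q * qpoch_list c (z / \<sigma>) q))
    = 2 * pi * (1 / r) * qtheta f q * qtheta (f * d1 / d2) q
        / ((1 - q) * s * (qpoch q q) ^ 2 * qtheta (d2 / d1) q)
      * jackson_int (\<lambda>u. (qpoch (q * r * u / s) q * qpoch (q * (1 / r) * u / s) q
                           * qpoch_list a (d1 * (1 / r) * u / s) q)
                          / qpoch_list c (d1 * (1 / r) * u / s) q)
          (s * (1 / r)) (s * r) q"
proof -
  obtain R1 where R1: "1 / \<sigma> < R1" "\<forall>ck\<in>set c. norm ck * R1 < 1"
    using exists_radius_above_inverse[OF h\<sigma> hc] by blast
  interpret qcontour q f d1 d2 a c "1 / \<sigma>" R1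
    using hq hd hf hdb R1 hd21 by unfold_locales auto
  show ?thesis
    unfolding integral_cong[OF integrand_on_circle[OF h\<sigma> refl]] integral_integrand_circle
    by (rule residue_sums_eq_jackson_int[OF hs hr])
qed

end
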